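(* Let $A,B\subseteq\omega$ with $B$ infinite. If $A$ is c.e. relative to every infinite subset of $B$, then there is an infinite $C\subseteq B$ and a single relative c.e. operator $\Theta$ with $\Theta(S)=A$ for every infinite $S\subseteq C$.
   Context: A relative c.e. operator is a c.e. set $\Theta$ of pairs $(\sigma,x)\in 2^{<\omega}\times\omega$, with $\Theta(X)$ the set of $x$ such that $(\sigma,x)\in\Theta$ for some initial segment $\sigma$ of the characteristic function of $X$. *)

theory Defs
  imports Main "HOL-Library.Nat_Bijection"
begin

text \<open>Primitive recursive functions on natural-number argument lists
 (arity-free: missing arguments read as 0, extra arguments are ignored;
 this computes exactly the primitive recursive functions).\<close>

datatype prfun = Zero | Succ | Proj nat | Comp prfun "prfun list" | Prec prfun prfun

fun pr_eval :: "prfun \<Rightarrow> nat list \<Rightarrow> nat" where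
  "pr_eval Zero xs = 0"
| "pr_eval Succ xs = Suc (case xs of [] \<Rightarrow> 0 | x # _ \<Rightarrow> x)"
| "pr_eval (Proj i) xs = (if i < length xs then xs ! i else 0)"
| "pr_eval (Comp f gs) xs = pr_eval f (map (\<lambda>g. pr_eval g xs) gs)"
| "pr_eval (Prec f g) xs =
     (case xs of [] \<Rightarrow> pr_eval f []
      | (n # ys) \<Rightarrow> rec_nat (pr_eval f ys) (\<lambda>k r. pr_eval g (k # r # ys)) n)"

definition ce :: "nat set \<Rightarrow> bool" where
  "ce S \<longleftrightarrow> (\<exists>f. S = {x. \<exists>y. pr_eval f [x, y] = 0})"

definition code_pair :: "bool list \<Rightarrow> nat \<Rightarrow> nat" where
  "code_pair \<sigma> x = prod_encode (list_encode (map of_bool \<sigma>), x)"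

definition ce_operator :: "(bool list \<times> nat) set \<Rightarrow> bool" where
  "ce_operator \<Theta> \<longleftrightarrow> ce {code_pair \<sigma> x | \<sigma> x. (\<sigma>, x) \<in> \<Theta>}"

definition init_seg :: "bool list \<Rightarrow> nat set \<Rightarrow> bool" where
  "init_seg \<sigma> X \<longleftrightarrow> \<sigma> = map (\<lambda>i. i \<in> X) [0..<length \<sigma>]"

definition op_apply :: "(bool list \<times> nat) set \<Rightarrow> nat set \<Rightarrow> nat set" where
  "op_apply \<Theta> X = {x. \<exists>\<sigma>. (\<sigma>, x) \<in> \<Theta> \<and> init_seg \<sigma> X}"

definition ce_in :: "nat set \<Rightarrow> nat set \<Rightarrow> bool" where
  "ce_in A X \<longleftrightarrow> (\<exists>\<Theta>. ce_operator \<Theta> \<and> op_apply \<Theta> X = A)"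

end

(*
  Mathias forcing below B. A condition (F, C) has F finite and C \<subseteq> B infinite; its cone consists of
  the sets G with F \<subseteq> G \<subseteq> F \<union> C. Suppose no infinite C \<subseteq> B admits a uniform operator. Then
  every c.e. operator \<Theta> can be defeated below every condition: either \<Theta> enumerates some x \<notin> A
  from a string that fits the cone, and we extend F to fix that string; or "\<Theta> applied within
  the cone of F" only enumerates elements of A. That restricted operator is again c.e. (its
  defining relation on codes is primitive recursive), so by assumption it misses some x \<in> A
  on an infinite S \<subseteq> C, and then \<Theta> misses x on every set in the cone of (F, S). As there are
  countably many c.e. operators, a descending sequence of conditions defeats all of them, and
  the union of its finite parts is an infinite G \<subseteq> B in which A is not c.e.
*)

theory Submission
  imports Defs "HOL-Library.Countable_Set"
begin

section \<open>Primitive recursive functions of fixed arity\<close>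

definition prim_rec :: "nat \<Rightarrow> (nat list \<Rightarrow> nat) \<Rightarrow> bool" where
  "prim_rec n F \<longleftrightarrow> (\<exists>p. \<forall>xs. length xs = n \<longrightarrow> pr_eval p xs = F xs)"

lemma prim_rec_cong: "prim_rec n F \<Longrightarrow> (\<And>xs. length xs = n \<Longrightarrow> F xs = G xs) \<Longrightarrow> prim_rec n G"
  unfolding prim_rec_def by metis

lemma prim_rec_Suc: "prim_rec n F \<Longrightarrow> prim_rec n (\<lambda>xs. Suc (F xs))"
proof -
  assume "prim_rec n F"
  then obtain p where "\<forall>xs. length xs = n \<longrightarrow> pr_eval p xs = F xs"
    unfolding prim_rec_def by blast
  then show ?thesis unfolding prim_rec_def by (intro exI[of _ "Comp Succ [p]"]) simp
qed

lemma prim_rec_const: "prim_rec n (\<lambda>xs. c)"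
proof (induction c)
  case 0
  show ?case unfolding prim_rec_def by (rule exI[of _ Zero]) simp
next
  case (Suc c)
  then show ?case by (rule prim_rec_Suc)
qed

lemma prim_rec_nth: "i < n \<Longrightarrow> prim_rec n (\<lambda>xs. xs ! i)"
  unfolding prim_rec_def by (rule exI[of _ "Proj i"]) simp

lemma prim_rec_programs:
  assumes "\<forall>h\<in>set hs. prim_rec n h"
  shows "\<exists>ps. \<forall>xs. length xs = n \<longrightarrow> map (\<lambda>p. pr_eval p xs) ps = map (\<lambda>h. h xs) hs"
  using assms
proof (induction hs)
  case Nil
  show ?case by simp
next
  case (Cons h hs)
  then obtain ps where "\<forall>xs. length xs = n \<longrightarrow> map (\<lambda>p. pr_eval p xs) ps = map (\<lambda>h. h xs) hs"
    by auto
  moreover obtain p where "\<forall>xs. length xs = n \<longrightarrow> pr_eval p xs = h xs"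
    using Cons.prems unfolding prim_rec_def by auto
  ultimately show ?case by (intro exI[of _ "p # ps"]) simp
qed

lemma prim_rec_comp:
  assumes "prim_rec (length hs) G" and "\<forall>h\<in>set hs. prim_rec n h"
  shows "prim_rec n (\<lambda>xs. G (map (\<lambda>h. h xs) hs))"
proof -
  obtain q where "\<forall>ys. length ys = length hs \<longrightarrow> pr_eval q ys = G ys"
    using assms(1) unfolding prim_rec_def by auto
  moreover obtain ps where "\<forall>xs. length xs = n \<longrightarrow> map (\<lambda>p. pr_eval p xs) ps = map (\<lambda>h. h xs) hs"
    using prim_rec_programs[OF assms(2)] by auto
  ultimately show ?thesis unfolding prim_rec_def by (intro exI[of _ "Comp q ps"]) simp
qed

lemma prim_rec_reindex:
  assumes "prim_rec (length is) G" and "\<forall>i\<in>set is. i < n"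
  shows "prim_rec n (\<lambda>xs. G (map ((!) xs) is))"
  using prim_rec_comp[of "map (\<lambda>i xs. xs ! i) is" G n] assms
  by (simp add: prim_rec_nth comp_def)

lemma prim_rec_tl:
  assumes "prim_rec n G"
  shows "prim_rec (Suc n) (\<lambda>xs. G (tl xs))"
proof (rule prim_rec_cong)
  show "prim_rec (Suc n) (\<lambda>xs. G (map ((!) xs) [1..<Suc n]))"
    using prim_rec_reindex[of "[1..<Suc n]" G "Suc n"] assms by (simp del: upt_Suc)
  show "G (map ((!) xs) [1..<Suc n]) = G (tl xs)" if "length xs = Suc n" for xs
    using that by (intro arg_cong[where f = G]) (simp add: list_eq_iff_nth_eq nth_tl del: upt_Suc)
qed

lemma prim_rec_drop2:
  assumes "prim_rec n G"
  shows "prim_rec (Suc (Suc n)) (\<lambda>xs. G (drop 2 xs))"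
proof (rule prim_rec_cong)
  show "prim_rec (Suc (Suc n)) (\<lambda>xs. G (map ((!) xs) [2..<n+2]))"
    using prim_rec_reindex[of "[2..<n+2]" G "Suc (Suc n)"] assms by (simp del: upt_Suc)
  show "G (map ((!) xs) [2..<n+2]) = G (drop 2 xs)" if "length xs = Suc (Suc n)" for xs
    using that by (intro arg_cong[where f = G]) (simp add: list_eq_iff_nth_eq del: upt_Suc)
qed

lemma prim_rec_pr_eval: "prim_rec n a \<Longrightarrow> prim_rec n b \<Longrightarrow> prim_rec n (\<lambda>xs. pr_eval p [a xs, b xs])"
  using prim_rec_comp[of "[a, b]" "pr_eval p" n] unfolding prim_rec_def by auto

lemma prim_rec_rec_nat:
  assumes "prim_rec n a" "prim_rec n f" "prim_rec (Suc (Suc n)) g"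
  shows "prim_rec n (\<lambda>xs. rec_nat (f xs) (\<lambda>k r. g (k # r # xs)) (a xs))"
proof -
  obtain pa where pa: "\<forall>xs. length xs = n \<longrightarrow> pr_eval pa xs = a xs"
    using assms(1) unfolding prim_rec_def by auto
  obtain pf where pf: "\<forall>xs. length xs = n \<longrightarrow> pr_eval pf xs = f xs"
    using assms(2) unfolding prim_rec_def by auto
  obtain pg where pg: "\<forall>ys. length ys = Suc (Suc n) \<longrightarrow> pr_eval pg ys = g ys"
    using assms(3) unfolding prim_rec_def by auto
  have "pr_eval (Comp (Prec pf pg) (pa # map Proj [0..<n])) xs = rec_nat (f xs) (\<lambda>k r. g (k # r # xs)) (a xs)"
    if "length xs = n" for xs
  proof -
    have "map (\<lambda>q. pr_eval q xs) (map Proj [0..<n]) = xs"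
      using that by (simp add: list_eq_iff_nth_eq del: upt_Suc)
    moreover have "(\<lambda>k r. pr_eval pg (k # r # xs)) = (\<lambda>k r. g (k # r # xs))"
      using pg that by (intro ext) simp
    ultimately show ?thesis using pa pf that by simp
  qed
  then show ?thesis unfolding prim_rec_def by blast
qed

text \<open>Step functions are written as redexes \<open>(\<lambda>ys. \<dots>) (k # r # xs)\<close> so that
  prim_rec_rec_nat applies without higher-order unification.\<close>

lemma prim_rec_add: "prim_rec n a \<Longrightarrow> prim_rec n b \<Longrightarrow> prim_rec n (\<lambda>xs. a xs + b xs)"
proof -
  assume a: "prim_rec n a" and b: "prim_rec n b"
  have "rec_nat c (\<lambda>k r. Suc r) m = m + c" for c m :: nat
    by (induction m) auto
  moreover have "prim_rec n (\<lambda>xs. rec_nat (b xs) (\<lambda>k r. (\<lambda>ys. Suc (ys ! 1)) (k # r # xs)) (a xs))"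
    by (intro prim_rec_rec_nat a b prim_rec_Suc prim_rec_nth) simp
  ultimately show ?thesis by (auto elim: prim_rec_cong)
qed

lemma prim_rec_pred: "prim_rec n a \<Longrightarrow> prim_rec n (\<lambda>xs. a xs - 1)"
proof -
  assume a: "prim_rec n a"
  have "rec_nat 0 (\<lambda>k r. k) m = m - (1::nat)" for m
    by (induction m) auto
  moreover have "prim_rec n (\<lambda>xs. rec_nat ((\<lambda>_. 0) xs) (\<lambda>k r. (\<lambda>ys. ys ! 0) (k # r # xs)) (a xs))"
    by (intro prim_rec_rec_nat a prim_rec_const prim_rec_nth) simp
  ultimately show ?thesis by (auto elim: prim_rec_cong)
qed

lemma prim_rec_diff: "prim_rec n a \<Longrightarrow> prim_rec n b \<Longrightarrow> prim_rec n (\<lambda>xs. a xs - b xs)"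
proof -
  assume a: "prim_rec n a" and b: "prim_rec n b"
  have "rec_nat c (\<lambda>k r. r - 1) m = c - (m::nat)" for c m
    by (induction m) auto
  moreover have "prim_rec n (\<lambda>xs. rec_nat (a xs) (\<lambda>k r. (\<lambda>ys. ys ! 1 - 1) (k # r # xs)) (b xs))"
    by (intro prim_rec_rec_nat a b prim_rec_pred prim_rec_nth) simp
  ultimately show ?thesis by (auto elim: prim_rec_cong)
qed

lemma prim_rec_mult: "prim_rec n a \<Longrightarrow> prim_rec n b \<Longrightarrow> prim_rec n (\<lambda>xs. a xs * b xs)"
proof -
  assume a: "prim_rec n a" and b: "prim_rec n b"
  have "rec_nat 0 (\<lambda>k r. r + c) m = m * (c::nat)" for c m
    by (induction m) auto
  moreover have "prim_rec n (\<lambda>xs. rec_nat ((\<lambda>_. 0) xs) (\<lambda>k r. (\<lambda>ys. ys ! 1 + b (drop 2 ys)) (k # r # xs)) (a xs))"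
    by (intro prim_rec_rec_nat a prim_rec_const prim_rec_add prim_rec_nth prim_rec_drop2 b) simp
  ultimately show ?thesis by (auto elim: prim_rec_cong)
qed

lemma prim_rec_triangle: "prim_rec n a \<Longrightarrow> prim_rec n (\<lambda>xs. triangle (a xs))"
proof -
  assume a: "prim_rec n a"
  have "rec_nat 0 (\<lambda>k r. r + Suc k) m = triangle m" for m
    by (induction m) auto
  moreover have "prim_rec n (\<lambda>xs. rec_nat ((\<lambda>_. 0) xs) (\<lambda>k r. (\<lambda>ys. ys ! 1 + Suc (ys ! 0)) (k # r # xs)) (a xs))"
    by (intro prim_rec_rec_nat a prim_rec_const prim_rec_add prim_rec_Suc prim_rec_nth) simp_all
  ultimately show ?thesis by (auto elim: prim_rec_cong)
qed

lemma prim_rec_eq: "prim_rec n a \<Longrightarrow> prim_rec n b \<Longrightarrow> prim_rec n (\<lambda>xs. of_bool (a xs = b xs))"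
proof -
  assume "prim_rec n a" "prim_rec n b"
  then have "prim_rec n (\<lambda>xs. 1 - ((a xs - b xs) + (b xs - a xs)))"
    by (intro prim_rec_diff prim_rec_add prim_rec_const)
  then show ?thesis by (rule prim_rec_cong) auto
qed

lemma prim_rec_le: "prim_rec n a \<Longrightarrow> prim_rec n b \<Longrightarrow> prim_rec n (\<lambda>xs. of_bool (a xs \<le> b xs))"
proof -
  assume "prim_rec n a" "prim_rec n b"
  then have "prim_rec n (\<lambda>xs. 1 - (a xs - b xs))"
    by (intro prim_rec_diff prim_rec_const)
  then show ?thesis by (rule prim_rec_cong) auto
qed

lemma prim_rec_conj:
  "prim_rec n (\<lambda>xs. of_bool (P xs)) \<Longrightarrow> prim_rec n (\<lambda>xs. of_bool (Q xs)) \<Longrightarrow>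
    prim_rec n (\<lambda>xs. of_bool (P xs \<and> Q xs))"
  by (drule (1) prim_rec_mult, erule prim_rec_cong) simp

lemma prim_rec_not: "prim_rec n (\<lambda>xs. of_bool (P xs)) \<Longrightarrow> prim_rec n (\<lambda>xs. of_bool (\<not> P xs))"
  by (drule prim_rec_diff[OF prim_rec_const[of n 1]], erule prim_rec_cong) simp

lemma prim_rec_disj:
  "prim_rec n (\<lambda>xs. of_bool (P xs)) \<Longrightarrow> prim_rec n (\<lambda>xs. of_bool (Q xs)) \<Longrightarrow>
    prim_rec n (\<lambda>xs. of_bool (P xs \<or> Q xs))"
  using prim_rec_not[of n "\<lambda>xs. \<not> P xs \<and> \<not> Q xs"] by (simp add: prim_rec_conj prim_rec_not)

lemma prim_rec_imp:
  "prim_rec n (\<lambda>xs. of_bool (P xs)) \<Longrightarrow> prim_rec n (\<lambda>xs. of_bool (Q xs)) \<Longrightarrow>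
    prim_rec n (\<lambda>xs. of_bool (P xs \<longrightarrow> Q xs))"
  using prim_rec_disj[of n "\<lambda>xs. \<not> P xs" Q] by (simp add: prim_rec_not)

lemma prim_rec_if:
  assumes "prim_rec n (\<lambda>xs. of_bool (P xs))" "prim_rec n a" "prim_rec n b"
  shows "prim_rec n (\<lambda>xs. if P xs then a xs else b xs)"
proof -
  have "prim_rec n (\<lambda>xs. of_bool (P xs) * a xs + (1 - of_bool (P xs)) * b xs)"
    by (intro prim_rec_add prim_rec_mult prim_rec_diff prim_rec_const assms)
  then show ?thesis by (rule prim_rec_cong) auto
qed

lemma prim_rec_bounded_all:
  assumes P: "prim_rec (Suc n) (\<lambda>ys. of_bool (P ys))" and a: "prim_rec n a"
  shows "prim_rec n (\<lambda>xs. of_bool (\<forall>k<a xs. P (k # xs)))"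
proof -
  have "rec_nat 1 (\<lambda>k r. r * of_bool (Q k)) m = (of_bool (\<forall>k<m. Q k) :: nat)" for Q m
    by (induction m) (auto simp: less_Suc_eq)
  moreover have "prim_rec (Suc (Suc n)) (\<lambda>ys. of_bool (P (ys ! 0 # drop 2 ys)))"
  proof (rule prim_rec_cong)
    show "prim_rec (Suc (Suc n)) (\<lambda>ys. of_bool (P (map ((!) ys) (0 # [2..<n+2]))))"
      using prim_rec_reindex[of "0 # [2..<n+2]" _ "Suc (Suc n)"] P by (simp del: upt_Suc)
    show "of_bool (P (map ((!) ys) (0 # [2..<n+2]))) = (of_bool (P (ys ! 0 # drop 2 ys)) :: nat)"
      if "length ys = Suc (Suc n)" for ys
      using that by (intro arg_cong[where f = "\<lambda>zs. of_bool (P zs)"])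
        (simp add: list_eq_iff_nth_eq nth_Cons del: upt_Suc split: nat.split)
  qed
  then have "prim_rec n (\<lambda>xs. rec_nat ((\<lambda>_. 1) xs)
      (\<lambda>k r. (\<lambda>ys. ys ! 1 * of_bool (P (ys ! 0 # drop 2 ys))) (k # r # xs)) (a xs))"
    by (intro prim_rec_rec_nat a prim_rec_const prim_rec_mult prim_rec_nth) simp_all
  ultimately show ?thesis by (auto elim: prim_rec_cong)
qed

lemma prim_rec_mem: "finite F \<Longrightarrow> prim_rec n a \<Longrightarrow> prim_rec n (\<lambda>xs. of_bool (a xs \<in> F))"
proof (induction F rule: finite_induct)
  case empty
  then show ?case by (simp add: prim_rec_const)
next
  case (insert x F)
  then have "prim_rec n (\<lambda>xs. of_bool (a xs = x \<or> a xs \<in> F))"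
    by (intro prim_rec_disj prim_rec_eq prim_rec_const) auto
  then show ?case by simp
qed

lemma ce_if_prim_rec:
  assumes "prim_rec 2 (\<lambda>xs. of_bool (P (xs ! 0) (xs ! 1)))"
  shows "ce {x. \<exists>y. P x y}"
proof -
  obtain p where "\<forall>xs. length xs = 2 \<longrightarrow> pr_eval p xs = of_bool (\<not> P (xs ! 0) (xs ! 1))"
    using prim_rec_not[OF assms] unfolding prim_rec_def by blast
  then have "{x. \<exists>y. P x y} = {x. \<exists>y. pr_eval p [x, y] = 0}" by auto
  then show ?thesis unfolding ce_def by blast
qed


section \<open>Decoding pairs and lists\<close>

definition triangle_root :: "nat \<Rightarrow> nat" where
  "triangle_root c = rec_nat 0 (\<lambda>k r. if triangle (Suc r) \<le> Suc k then Suc r else r) c"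

lemma triangle_root_bounds: "triangle (triangle_root c) \<le> c \<and> c < triangle (Suc (triangle_root c))"
proof (induction c)
  case 0
  then show ?case by (simp add: triangle_root_def)
next
  case (Suc c)
  have "triangle_root (Suc c) =
      (if triangle (Suc (triangle_root c)) \<le> Suc c then Suc (triangle_root c) else triangle_root c)"
    by (simp add: triangle_root_def)
  with Suc show ?case by auto
qed

lemma prod_decode_triangle_root:
  "prod_decode c = (c - triangle (triangle_root c), triangle_root c - (c - triangle (triangle_root c)))"
proof -
  have "prod_encode (c - triangle (triangle_root c), triangle_root c - (c - triangle (triangle_root c))) = c"
    using triangle_root_bounds[of c] by (simp add: prod_encode_def)
  then show ?thesis by (metis prod_encode_inverse)
qed

lemma prim_rec_triangle_root: "prim_rec n a \<Longrightarrow> prim_rec n (\<lambda>xs. triangle_root (a xs))"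
proof -
  assume a: "prim_rec n a"
  have "prim_rec n (\<lambda>xs. rec_nat ((\<lambda>_. 0) xs) (\<lambda>k r. (\<lambda>ys.
      if triangle (Suc (ys ! 1)) \<le> Suc (ys ! 0) then Suc (ys ! 1) else ys ! 1) (k # r # xs)) (a xs))"
    by (intro prim_rec_rec_nat a prim_rec_const prim_rec_if prim_rec_le prim_rec_triangle
        prim_rec_Suc prim_rec_nth) simp_all
  then show ?thesis by (rule prim_rec_cong) (simp add: triangle_root_def cong: if_cong)
qed

lemma prim_rec_prod_decode:
  assumes "prim_rec n a"
  shows prim_rec_fst_prod_decode: "prim_rec n (\<lambda>xs. fst (prod_decode (a xs)))"
    and prim_rec_snd_prod_decode: "prim_rec n (\<lambda>xs. snd (prod_decode (a xs)))"
proof -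
  show "prim_rec n (\<lambda>xs. fst (prod_decode (a xs)))"
    unfolding prod_decode_triangle_root
    by (simp, intro prim_rec_diff prim_rec_triangle prim_rec_triangle_root assms)
  show "prim_rec n (\<lambda>xs. snd (prod_decode (a xs)))"
    unfolding prod_decode_triangle_root
    by (simp, intro prim_rec_diff prim_rec_triangle prim_rec_triangle_root assms)
qed

lemma prim_rec_prod_encode:
  "prim_rec n a \<Longrightarrow> prim_rec n b \<Longrightarrow> prim_rec n (\<lambda>xs. prod_encode (a xs, b xs))"
  unfolding prod_encode_def by (simp, intro prim_rec_add prim_rec_triangle)

definition code_hd :: "nat \<Rightarrow> nat" where
  "code_hd a = fst (prod_decode (a - 1))"

definition code_tl :: "nat \<Rightarrow> nat" where
  "code_tl a = snd (prod_decode (a - 1))"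

definition code_drop :: "nat \<Rightarrow> nat \<Rightarrow> nat" where
  "code_drop k = code_tl ^^ k"

lemma prim_rec_code_hd: "prim_rec n a \<Longrightarrow> prim_rec n (\<lambda>xs. code_hd (a xs))"
  unfolding code_hd_def by (intro prim_rec_fst_prod_decode prim_rec_pred)

lemma prim_rec_code_tl: "prim_rec n a \<Longrightarrow> prim_rec n (\<lambda>xs. code_tl (a xs))"
  unfolding code_tl_def by (intro prim_rec_snd_prod_decode prim_rec_pred)

lemma prim_rec_code_drop: "prim_rec n k \<Longrightarrow> prim_rec n a \<Longrightarrow> prim_rec n (\<lambda>xs. code_drop (k xs) (a xs))"
proof -
  assume k: "prim_rec n k" and a: "prim_rec n a"
  have "rec_nat c (\<lambda>_ r. code_tl r) m = code_drop m c" for c m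
    by (induction m) (simp_all add: code_drop_def)
  moreover have "prim_rec n (\<lambda>xs. rec_nat (a xs) (\<lambda>k r. (\<lambda>ys. code_tl (ys ! 1)) (k # r # xs)) (k xs))"
    by (intro prim_rec_rec_nat k a prim_rec_code_tl prim_rec_nth) simp
  ultimately show ?thesis by (auto elim: prim_rec_cong)
qed

lemma code_tl_list_encode: "code_tl (list_encode xs) = list_encode (tl xs)"
proof -
  have "prod_decode 0 = (0, 0)"
    using prod_encode_inverse[of "(0, 0)"] by (simp add: prod_encode_def)
  then show ?thesis by (cases xs) (simp_all add: code_tl_def)
qed

lemma code_hd_list_encode: "xs \<noteq> [] \<Longrightarrow> code_hd (list_encode xs) = hd xs"
  by (cases xs) (simp_all add: code_hd_def)

lemma code_drop_list_encode: "code_drop k (list_encode xs) = list_encode (drop k xs)"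
  by (induction k) (simp_all add: code_drop_def code_tl_list_encode drop_Suc tl_drop)

lemma code_drop_list_encode_eq_0: "code_drop k (list_encode xs) = 0 \<longleftrightarrow> length xs \<le> k"
proof -
  have "list_encode ys = 0 \<longleftrightarrow> ys = []" for ys
    by (cases ys) auto
  then show ?thesis by (simp add: code_drop_list_encode)
qed

lemma code_hd_code_drop_list_encode: "k < length xs \<Longrightarrow> code_hd (code_drop k (list_encode xs)) = xs ! k"
  by (simp add: code_drop_list_encode code_hd_list_encode hd_drop_conv_nth)

lemma length_le_list_encode: "length xs \<le> list_encode xs"
proof (induction xs)
  case (Cons x xs)
  then show ?case using le_prod_encode_2[of "list_encode xs" x] by simp
qed simp

definition bits_code :: "bool list \<Rightarrow> nat" where
  "bits_code \<sigma> = list_encode (map of_bool \<sigma>)"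

lemma code_pair_bits_code: "code_pair \<sigma> x = prod_encode (bits_code \<sigma>, x)"
  by (simp add: code_pair_def bits_code_def)

lemma bits_code_eq_iff: "bits_code \<sigma> = bits_code \<tau> \<longleftrightarrow> \<sigma> = \<tau>"
  by (simp add: bits_code_def list_encode_eq inj_map_eq_map inj_def)

lemma code_pair_eq_iff: "code_pair \<sigma> x = code_pair \<tau> y \<longleftrightarrow> \<sigma> = \<tau> \<and> x = y"
  by (simp add: code_pair_bits_code prod_encode_eq bits_code_eq_iff)

text \<open>The length of a list is at most its code, so the bound \<open>k < a\<close> covers every position.\<close>

definition is_bits_code :: "nat \<Rightarrow> bool" where
  "is_bits_code a \<longleftrightarrow> (\<forall>k<a. code_drop k a \<noteq> 0 \<longrightarrow> code_hd (code_drop k a) \<le> 1)"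

lemma is_bits_code_iff: "is_bits_code a \<longleftrightarrow> a \<in> range bits_code"
proof -
  define xs where "xs = list_decode a"
  have a: "a = list_encode xs" by (simp add: xs_def)
  have "is_bits_code a \<longleftrightarrow> (\<forall>k<length xs. xs ! k \<le> 1)"
    using length_le_list_encode[of xs]
    unfolding is_bits_code_def a by (auto simp: code_drop_list_encode_eq_0 code_hd_code_drop_list_encode)
  also have "\<dots> \<longleftrightarrow> (\<exists>\<sigma>. xs = map of_bool \<sigma>)"
  proof
    assume "\<forall>k<length xs. xs ! k \<le> 1"
    then have "xs = map of_bool (map (\<lambda>n. n \<noteq> 0) xs)"
      by (auto simp: list_eq_iff_nth_eq le_Suc_eq)
    then show "\<exists>\<sigma>. xs = map of_bool \<sigma>" by blast
  qed auto
  also have "\<dots> \<longleftrightarrow> a \<in> range bits_code"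
    unfolding a bits_code_def by (auto simp: list_encode_eq)
  finally show ?thesis .
qed

lemma prim_rec_is_bits_code: "prim_rec n a \<Longrightarrow> prim_rec n (\<lambda>xs. of_bool (is_bits_code (a xs)))"
proof -
  assume a: "prim_rec n a"
  have "prim_rec (Suc n) (\<lambda>ys. of_bool (code_drop (ys ! 0) (a (tl ys)) \<noteq> 0 \<longrightarrow>
      code_hd (code_drop (ys ! 0) (a (tl ys))) \<le> 1))"
    by (intro prim_rec_imp prim_rec_not prim_rec_eq prim_rec_le prim_rec_code_hd prim_rec_code_drop
        prim_rec_nth prim_rec_tl[OF a] prim_rec_const) simp_all
  from prim_rec_bounded_all[OF this a] show ?thesis
    by (rule prim_rec_cong) (simp add: is_bits_code_def)
qed

section \<open>Operators restricted to a Mathias cone\<close>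

text \<open>\<open>fits F S \<sigma>\<close>: \<open>\<sigma>\<close> is an initial segment of some \<open>G\<close> with \<open>F \<subseteq> G \<subseteq> F \<union> S\<close>.\<close>

definition fits :: "nat set \<Rightarrow> nat set \<Rightarrow> bool list \<Rightarrow> bool" where
  "fits F S \<sigma> \<longleftrightarrow> (\<forall>i<length \<sigma>. (\<sigma> ! i \<longrightarrow> i \<in> F \<or> i \<in> S) \<and> (i \<in> F \<longrightarrow> \<sigma> ! i))"

definition code_fits :: "nat set \<Rightarrow> nat \<Rightarrow> nat \<Rightarrow> bool" where
  "code_fits F s t \<longleftrightarrow> (\<forall>k<s. code_drop k s \<noteq> 0 \<longrightarrow> code_drop k t \<noteq> 0 \<and>
     (code_hd (code_drop k s) \<noteq> 0 \<longrightarrow> k \<in> F \<or> code_hd (code_drop k t) \<noteq> 0) \<and>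
     (k \<in> F \<longrightarrow> code_hd (code_drop k s) \<noteq> 0))"

lemma code_fits_bits_code:
  "code_fits F (bits_code \<sigma>) (bits_code \<tau>) \<longleftrightarrow>
     length \<sigma> \<le> length \<tau> \<and> fits F {i. i < length \<tau> \<and> \<tau> ! i} \<sigma>"
proof -
  have "code_fits F (bits_code \<sigma>) (bits_code \<tau>) \<longleftrightarrow>
      (\<forall>k<length \<sigma>. k < length \<tau> \<and> (\<sigma> ! k \<longrightarrow> k \<in> F \<or> \<tau> ! k) \<and> (k \<in> F \<longrightarrow> \<sigma> ! k))"
    using length_le_list_encode[of "map of_bool \<sigma>"]
    unfolding code_fits_def bits_code_def
    by (auto simp: code_drop_list_encode_eq_0 code_hd_code_drop_list_encode not_le
        dest: order.strict_trans2)
  also have "\<dots> \<longleftrightarrow> length \<sigma> \<le> length \<tau> \<and> fits F {i. i < length \<tau> \<and> \<tau> ! i} \<sigma>"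
    unfolding fits_def by (auto simp: not_le[symmetric] dest: order.strict_trans2)
  finally show ?thesis .
qed

lemma prim_rec_code_fits:
  assumes F: "finite F" and a: "prim_rec n a" and b: "prim_rec n b"
  shows "prim_rec n (\<lambda>xs. of_bool (code_fits F (a xs) (b xs)))"
proof -
  have "prim_rec (Suc n) (\<lambda>ys. of_bool (code_drop (ys ! 0) (a (tl ys)) \<noteq> 0 \<longrightarrow>
      code_drop (ys ! 0) (b (tl ys)) \<noteq> 0 \<and>
      (code_hd (code_drop (ys ! 0) (a (tl ys))) \<noteq> 0 \<longrightarrow>
        ys ! 0 \<in> F \<or> code_hd (code_drop (ys ! 0) (b (tl ys))) \<noteq> 0) \<and>
      (ys ! 0 \<in> F \<longrightarrow> code_hd (code_drop (ys ! 0) (a (tl ys))) \<noteq> 0)))"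
    by (intro prim_rec_imp prim_rec_conj prim_rec_disj prim_rec_not prim_rec_eq prim_rec_mem[OF F]
        prim_rec_code_hd prim_rec_code_drop prim_rec_nth prim_rec_tl[OF a] prim_rec_tl[OF b]
        prim_rec_const) simp_all
  from prim_rec_bounded_all[OF this a] show ?thesis
    by (rule prim_rec_cong) (simp add: code_fits_def)
qed

instance prfun :: countable by countable_datatype

definition operator_of :: "prfun \<Rightarrow> (bool list \<times> nat) set" where
  "operator_of f = {(\<sigma>, x). \<exists>y. pr_eval f [code_pair \<sigma> x, y] = 0}"

lemma ce_operator_obtain_program:
  assumes "ce_operator \<Theta>"
  obtains f where "\<Theta> = operator_of f"
proof -
  obtain f where f: "{code_pair \<sigma> x | \<sigma> x. (\<sigma>, x) \<in> \<Theta>} = {c. \<exists>y. pr_eval f [c, y] = 0}"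
    using assms unfolding ce_operator_def ce_def by blast
  have "(\<sigma>, x) \<in> \<Theta> \<longleftrightarrow> code_pair \<sigma> x \<in> {code_pair \<sigma> x | \<sigma> x. (\<sigma>, x) \<in> \<Theta>}" for \<sigma> x
    by (auto simp: code_pair_eq_iff)
  then have "\<Theta> = operator_of f"
    unfolding f operator_of_def by auto
  then show thesis by (rule that)
qed

lemma countable_ce_operators: "countable {\<Theta>. ce_operator \<Theta>}"
proof (rule countable_subset)
  show "{\<Theta>. ce_operator \<Theta>} \<subseteq> range operator_of"
    by (auto elim: ce_operator_obtain_program)
qed simp

definition op_apply_within :: "(bool list \<times> nat) set \<Rightarrow> nat set \<Rightarrow> nat set \<Rightarrow> nat set" where
  "op_apply_within \<Theta> F S = {x. \<exists>\<sigma>. (\<sigma>, x) \<in> \<Theta> \<and> fits F S \<sigma>}"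

definition within_operator :: "(bool list \<times> nat) set \<Rightarrow> nat set \<Rightarrow> (bool list \<times> nat) set" where
  "within_operator \<Theta> F = {(\<tau>, x). \<exists>\<sigma>. (\<sigma>, x) \<in> \<Theta> \<and> length \<sigma> \<le> length \<tau> \<and>
     fits F {i. i < length \<tau> \<and> \<tau> ! i} \<sigma>}"

lemma init_seg_nth: "init_seg \<tau> S \<Longrightarrow> i < length \<tau> \<Longrightarrow> \<tau> ! i \<longleftrightarrow> i \<in> S"
  unfolding init_seg_def by (metis add_0 diff_zero nth_map_upt)

lemma op_apply_within_operator: "op_apply (within_operator \<Theta> F) S = op_apply_within \<Theta> F S"
proof (intro equalityI subsetI)
  fix x assume "x \<in> op_apply (within_operator \<Theta> F) S"
  then obtain \<tau> \<sigma> where "init_seg \<tau> S" "(\<sigma>, x) \<in> \<Theta>" "length \<sigma> \<le> length \<tau>"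
    "fits F {i. i < length \<tau> \<and> \<tau> ! i} \<sigma>"
    unfolding op_apply_def within_operator_def by blast
  then have "(\<sigma>, x) \<in> \<Theta> \<and> fits F S \<sigma>"
    unfolding fits_def by (auto simp: init_seg_nth)
  then show "x \<in> op_apply_within \<Theta> F S"
    unfolding op_apply_within_def by blast
next
  fix x assume "x \<in> op_apply_within \<Theta> F S"
  then obtain \<sigma> where \<sigma>: "(\<sigma>, x) \<in> \<Theta>" "fits F S \<sigma>"
    unfolding op_apply_within_def by blast
  define \<tau> where "\<tau> = map (\<lambda>i. i \<in> S) [0..<length \<sigma>]"
  have "init_seg \<tau> S"
    unfolding init_seg_def \<tau>_def by simp
  moreover have "(\<tau>, x) \<in> within_operator \<Theta> F"
    using \<sigma> unfolding within_operator_def \<tau>_def fits_def by (auto intro!: exI[of _ \<sigma>])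
  ultimately show "x \<in> op_apply (within_operator \<Theta> F) S"
    unfolding op_apply_def by blast
qed

lemma ce_operator_within_operator:
  assumes F: "finite F" and "ce_operator \<Theta>"
  shows "ce_operator (within_operator \<Theta> F)"
proof -
  obtain f where f: "\<Theta> = operator_of f"
    using assms(2) by (rule ce_operator_obtain_program)
  text \<open>A code \<open>c\<close> of \<open>(\<tau>, x)\<close> is enumerated with witness \<open>w\<close> coding \<open>(\<sigma>, y)\<close>,
    where \<open>y\<close> witnesses \<open>(\<sigma>, x) \<in> \<Theta>\<close>.\<close>
  define P where "P c w \<longleftrightarrow> is_bits_code (fst (prod_decode c)) \<and> is_bits_code (fst (prod_decode w))
      \<and> pr_eval f [prod_encode (fst (prod_decode w), snd (prod_decode c)), snd (prod_decode w)] = 0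
      \<and> code_fits F (fst (prod_decode w)) (fst (prod_decode c))" for c w
  have "prim_rec 2 (\<lambda>xs. of_bool (P (xs ! 0) (xs ! 1)))"
    unfolding P_def
    by (intro prim_rec_conj prim_rec_is_bits_code prim_rec_code_fits[OF F] prim_rec_eq
        prim_rec_pr_eval prim_rec_prod_encode prim_rec_fst_prod_decode prim_rec_snd_prod_decode
        prim_rec_nth prim_rec_const) simp_all
  then have "ce {c. \<exists>w. P c w}"
    by (rule ce_if_prim_rec)
  moreover have "{code_pair \<tau> x | \<tau> x. (\<tau>, x) \<in> within_operator \<Theta> F} = {c. \<exists>w. P c w}"
  proof -
    have P_code_pair: "P (code_pair \<tau> x) w \<longleftrightarrow> (\<exists>\<sigma> y. w = code_pair \<sigma> y \<and>
        pr_eval f [code_pair \<sigma> x, y] = 0 \<and> code_fits F (bits_code \<sigma>) (bits_code \<tau>))" for \<tau> x w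
      unfolding P_def code_pair_bits_code is_bits_code_iff
      by (cases "prod_decode w") (auto, metis prod_decode_inverse)
    have "P c w \<Longrightarrow> \<exists>\<tau> x. c = code_pair \<tau> x" for c w
      unfolding P_def is_bits_code_iff code_pair_bits_code
      by (metis prod.collapse prod_decode_inverse rangeE)
    then have "{c. \<exists>w. P c w} = {code_pair \<tau> x | \<tau> x. \<exists>w. P (code_pair \<tau> x) w}"
      by blast
    also have "\<dots> = {code_pair \<tau> x | \<tau> x. (\<tau>, x) \<in> within_operator \<Theta> F}"
      unfolding P_code_pair f within_operator_def operator_of_def code_fits_bits_code[symmetric]
      by blast
    finally show ?thesis ..
  qed
  ultimately show ?thesis
    unfolding ce_operator_def by simp
qed

section \<open>Mathias forcing\<close>

definition between :: "nat set \<Rightarrow> nat set \<Rightarrow> nat set set" where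
  "between F C = {G. F \<subseteq> G \<and> G \<subseteq> F \<union> C}"

definition strict_extension :: "nat set \<Rightarrow> nat set \<Rightarrow> nat set \<Rightarrow> nat set \<Rightarrow> bool" where
  "strict_extension F' C' F C \<longleftrightarrow> finite F' \<and> F \<subset> F' \<and> F' \<subseteq> F \<union> C \<and> C' \<subseteq> C \<and> infinite C'"

lemma between_strict_extension: "strict_extension F' C' F C \<Longrightarrow> between F' C' \<subseteq> between F C"
  unfolding between_def strict_extension_def by blast

lemma strict_extension_mono: "strict_extension F' C' F S \<Longrightarrow> S \<subseteq> C \<Longrightarrow> strict_extension F' C' F C"
  unfolding strict_extension_def by blast

lemma ex_fresh_above: "infinite (C :: nat set) \<Longrightarrow> finite F \<Longrightarrow> \<exists>c\<in>C. c \<notin> F \<and> m \<le> c"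
proof -
  assume "infinite C" "finite F"
  then have "infinite (C - F - {..<m})"
    by (intro Diff_infinite_finite) auto
  then obtain c where "c \<in> C - F - {..<m}"
    using infinite_imp_nonempty by blast
  then show ?thesis by auto
qed

lemma ex_strict_extension_above:
  assumes "finite F" "infinite C"
  shows "\<exists>c0\<in>C. m \<le> c0 \<and> strict_extension (F \<union> {c0}) (C - {..c0}) F C"
proof -
  obtain c0 where "c0 \<in> C" "c0 \<notin> F" "m \<le> c0"
    using ex_fresh_above assms by blast
  moreover have "infinite (C - {..c0})"
    using assms(2) by (intro Diff_infinite_finite) auto
  ultimately show ?thesis
    unfolding strict_extension_def using assms(1) by blast
qed

lemma init_seg_fits: "init_seg \<sigma> G \<Longrightarrow> G \<in> between F S \<Longrightarrow> fits F S \<sigma>"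
  unfolding between_def fits_def by (auto simp: init_seg_nth)

lemma op_apply_subset_within: "G \<in> between F S \<Longrightarrow> op_apply \<Theta> G \<subseteq> op_apply_within \<Theta> F S"
  unfolding op_apply_def op_apply_within_def by (blast intro: init_seg_fits)

lemma op_apply_within_mono: "S \<subseteq> C \<Longrightarrow> op_apply_within \<Theta> F S \<subseteq> op_apply_within \<Theta> F C"
  unfolding op_apply_within_def fits_def by blast

text \<open>Placing the new element \<open>c0\<close> at or beyond \<open>length \<sigma>\<close> keeps \<open>\<sigma>\<close> an initial segment of every
  set in the new cone.\<close>

lemma force_mem:
  assumes "(\<sigma>, x) \<in> \<Theta>" "fits F C \<sigma>" "finite F" "infinite C"
  shows "\<exists>F' C'. strict_extension F' C' F C \<and> (\<forall>G\<in>between F' C'. x \<in> op_apply \<Theta> G)"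
proof -
  obtain c0 where c0: "c0 \<in> C" "length \<sigma> \<le> c0" and
    ext: "strict_extension (F \<union> {c0}) (C - {..c0}) F C"
    using ex_strict_extension_above[OF assms(3,4)] by blast
  define F' where "F' = F \<union> {i. i < length \<sigma> \<and> \<sigma> ! i} \<union> {c0}"
  have "{i. i < length \<sigma> \<and> \<sigma> ! i} \<subseteq> F \<union> C"
    using assms(2) unfolding fits_def by blast
  then have "strict_extension F' (C - {..c0}) F C"
    using ext unfolding strict_extension_def F'_def by auto
  moreover have "init_seg \<sigma> G" if "G \<in> between F' (C - {..c0})" for G
  proof -
    have G: "F' \<subseteq> G" "G \<subseteq> F' \<union> (C - {..c0})"
      using that unfolding between_def by auto
    have \<sigma>_G: "\<sigma> ! i \<longleftrightarrow> i \<in> G" if "i < length \<sigma>" for i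
    proof
      show "\<sigma> ! i \<Longrightarrow> i \<in> G"
        using G(1) that unfolding F'_def by blast
      assume "i \<in> G"
      moreover have "i \<notin> {c0} \<union> (C - {..c0})"
        using c0(2) that by auto
      ultimately have "i \<in> F \<or> \<sigma> ! i"
        using G(2) unfolding F'_def by blast
      then show "\<sigma> ! i"
        using assms(2) that unfolding fits_def by blast
    qed
    show ?thesis
      unfolding init_seg_def by (rule nth_equalityI) (simp_all add: \<sigma>_G)
  qed
  ultimately show ?thesis
    using assms(1) unfolding op_apply_def by blast
qed

lemma force_not_uniform:
  assumes F: "finite F" and C: "infinite C" and "ce_operator \<Theta>"
    and no_uniform: "\<forall>\<Psi>. ce_operator \<Psi> \<longrightarrow> (\<exists>S\<subseteq>C. infinite S \<and> op_apply \<Psi> S \<noteq> A)"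
  shows "\<exists>F' C'. strict_extension F' C' F C \<and> (\<forall>G\<in>between F' C'. op_apply \<Theta> G \<noteq> A)"
proof (cases "op_apply_within \<Theta> F C \<subseteq> A")
  case False
  then obtain x \<sigma> where "x \<notin> A" "(\<sigma>, x) \<in> \<Theta>" "fits F C \<sigma>"
    unfolding op_apply_within_def by blast
  moreover obtain F' C' where "strict_extension F' C' F C" "\<forall>G\<in>between F' C'. x \<in> op_apply \<Theta> G"
    using force_mem[OF \<open>(\<sigma>, x) \<in> \<Theta>\<close> \<open>fits F C \<sigma>\<close> F C] by blast
  ultimately show ?thesis by blast
next
  case True
  have "\<exists>S\<subseteq>C. infinite S \<and> op_apply (within_operator \<Theta> F) S \<noteq> A"
    using no_uniform ce_operator_within_operator[OF F \<open>ce_operator \<Theta>\<close>] by blast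
  then obtain S where S: "S \<subseteq> C" "infinite S" "op_apply_within \<Theta> F S \<noteq> A"
    unfolding op_apply_within_operator by blast
  moreover have "op_apply_within \<Theta> F S \<subseteq> A"
    using True op_apply_within_mono[OF S(1)] by blast
  ultimately obtain x where x: "x \<in> A" "x \<notin> op_apply_within \<Theta> F S"
    by blast
  obtain c0 where ext: "strict_extension (F \<union> {c0}) (S - {..c0}) F S"
    using ex_strict_extension_above[OF F S(2)] by blast
  have "op_apply \<Theta> G \<noteq> A" if "G \<in> between (F \<union> {c0}) (S - {..c0})" for G
  proof
    assume "op_apply \<Theta> G = A"
    moreover have "G \<in> between F S"
      using between_strict_extension[OF ext] that by blast
    ultimately have "x \<in> op_apply_within \<Theta> F S"
      using x(1) op_apply_subset_within by blast
    with x(2) show False ..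
  qed
  then show ?thesis
    using strict_extension_mono[OF ext S(1)] by blast
qed

lemma strict_extension_chain:
  assumes ext: "\<And>n. strict_extension (F (Suc n)) (C (Suc n)) (F n) (C n)"
  shows "infinite (\<Union>n. F n)" and "(\<Union>n. F n) \<in> between (F n) (C n)"
proof -
  have "F n \<subset> F (Suc n)" for n
    using ext unfolding strict_extension_def by blast
  then have "strict_mono F"
    by (simp add: strict_mono_Suc_iff)
  then have "inj F"
  proof (intro injI)
    fix m n assume "F m = F n"
    show "m = n"
    proof (rule ccontr)
      assume "m \<noteq> n"
      then have "F m < F n \<or> F n < F m"
        using strict_monoD[OF \<open>strict_mono F\<close>] by (metis linorder_neqE_nat)
      with \<open>F m = F n\<close> show False by simp
    qed
  qed
  then have "infinite (range F)"
    by (rule range_inj_infinite)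
  then show "infinite (\<Union>n. F n)"
    using finite_UnionD by blast
  have "F m \<subseteq> F n \<union> C n" for m
  proof (cases "m \<le> n")
    case True
    have "F m \<subseteq> F n"
      using lift_Suc_mono_le[of F, OF _ True] \<open>\<And>n. F n \<subset> F (Suc n)\<close> by blast
    then show ?thesis by blast
  next
    case False
    have "between (F m) (C m) \<subseteq> between (F n) (C n)"
      using lift_Suc_antimono_le[of "\<lambda>n. between (F n) (C n)"] between_strict_extension[OF ext] False
      by simp
    moreover have "F m \<in> between (F m) (C m)"
      unfolding between_def by blast
    ultimately show ?thesis
      unfolding between_def by blast
  qed
  then show "(\<Union>n. F n) \<in> between (F n) (C n)"
    unfolding between_def by blast
qed

lemma generic_for_sequence:
  fixes P :: "nat \<Rightarrow> nat set \<Rightarrow> bool"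
  assumes "infinite B"
    and dense: "\<And>n F C. finite F \<Longrightarrow> F \<subseteq> B \<Longrightarrow> C \<subseteq> B \<Longrightarrow> infinite C \<Longrightarrow>
      \<exists>F' C'. strict_extension F' C' F C \<and> (\<forall>G\<in>between F' C'. P n G)"
  shows "\<exists>G\<subseteq>B. infinite G \<and> (\<forall>n. P n G)"
proof -
  define cond where "cond n FC \<longleftrightarrow> finite (fst FC) \<and> fst FC \<subseteq> B \<and> snd FC \<subseteq> B \<and> infinite (snd FC)"
    for n :: nat and FC :: "nat set \<times> nat set"
  define step where "step n FC FC' \<longleftrightarrow> strict_extension (fst FC') (snd FC') (fst FC) (snd FC)
      \<and> (\<forall>G\<in>between (fst FC') (snd FC'). P n G)"
    for n :: nat and FC FC' :: "nat set \<times> nat set"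
  have "\<exists>s. \<forall>n. cond n (s n) \<and> step n (s n) (s (Suc n))"
  proof (rule dependent_nat_choice)
    show "\<exists>FC. cond 0 FC"
      using assms(1) unfolding cond_def by (intro exI[of _ "({}, B)"]) simp
    fix FC n assume "cond n FC"
    then obtain F' C' where FC': "strict_extension F' C' (fst FC) (snd FC)" "\<forall>G\<in>between F' C'. P n G"
      using dense[of "fst FC" "snd FC" n] unfolding cond_def by blast
    then have "cond (Suc n) (F', C')"
      using \<open>cond n FC\<close> unfolding cond_def strict_extension_def by auto
    moreover have "step n FC (F', C')"
      using FC' unfolding step_def by simp
    ultimately show "\<exists>FC'. cond (Suc n) FC' \<and> step n FC FC'"
      by blast
  qed
  then obtain s where s: "\<And>n. cond n (s n)" "\<And>n. step n (s n) (s (Suc n))"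
    by blast
  have chain: "strict_extension (fst (s (Suc n))) (snd (s (Suc n))) (fst (s n)) (snd (s n))" for n
    using s(2) unfolding step_def by blast
  note limit = strict_extension_chain[where F = "\<lambda>n. fst (s n)" and C = "\<lambda>n. snd (s n)", OF chain]
  define G where "G = (\<Union>n. fst (s n))"
  have "G \<subseteq> B"
    using s(1) unfolding G_def cond_def by blast
  moreover have "infinite G"
    unfolding G_def by (rule limit(1))
  moreover have "P n G" for n
    using limit(2)[of "Suc n"] s(2)[of n] unfolding G_def step_def by blast
  ultimately show ?thesis by blast
qed

lemma generic_for_countable_family:
  assumes "countable I" "infinite B"
    and dense: "\<And>i F C. i \<in> I \<Longrightarrow> finite F \<Longrightarrow> F \<subseteq> B \<Longrightarrow> C \<subseteq> B \<Longrightarrow> infinite C \<Longrightarrow>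
      \<exists>F' C'. strict_extension F' C' F C \<and> (\<forall>G\<in>between F' C'. P i G)"
  shows "\<exists>G\<subseteq>B. infinite G \<and> (\<forall>i\<in>I. P i G)"
proof (cases "I = {}")
  case True
  then show ?thesis using assms(2) by blast
next
  case False
  have "\<exists>G\<subseteq>B. infinite G \<and> (\<forall>n. P (from_nat_into I n) G)"
    by (rule generic_for_sequence[OF assms(2)], rule dense) (simp_all add: from_nat_into[OF False])
  then obtain G where G: "G \<subseteq> B" "infinite G" "\<And>n. P (from_nat_into I n) G"
    by blast
  have "P i G" if "i \<in> I" for i
    using G(3)[of "to_nat_on I i"] assms(1) that by simp
  with G(1,2) show ?thesis by blast
qed


theorem proposition3p7:
  fixes A B :: "nat set"
  assumes "infinite B"
    and "\<forall>S. S \<subseteq> B \<and> infinite S \<longrightarrow> ce_in A S"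
  shows "\<exists>C. C \<subseteq> B \<and> infinite C \<and>
           (\<exists>\<Theta>. ce_operator \<Theta> \<and> (\<forall>S. S \<subseteq> C \<and> infinite S \<longrightarrow> op_apply \<Theta> S = A))"
proof (rule ccontr)
  assume no_uniform_operator: "\<not> ?thesis"
  have no_uniform: "\<forall>\<Psi>. ce_operator \<Psi> \<longrightarrow> (\<exists>S\<subseteq>C. infinite S \<and> op_apply \<Psi> S \<noteq> A)"
    if "C \<subseteq> B" "infinite C" for C
  proof (intro allI impI)
    fix \<Psi> assume "ce_operator \<Psi>"
    with no_uniform_operator that have "\<not> (\<forall>S. S \<subseteq> C \<and> infinite S \<longrightarrow> op_apply \<Psi> S = A)"
      by blast
    then show "\<exists>S\<subseteq>C. infinite S \<and> op_apply \<Psi> S \<noteq> A"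
      by blast
  qed
  have "\<exists>G\<subseteq>B. infinite G \<and> (\<forall>\<Theta>\<in>{\<Theta>. ce_operator \<Theta>}. op_apply \<Theta> G \<noteq> A)"
  proof (rule generic_for_countable_family[OF countable_ce_operators assms(1)])
    fix \<Theta> F C
    assume "\<Theta> \<in> {\<Theta>. ce_operator \<Theta>}" "finite F" "F \<subseteq> B" "C \<subseteq> B" "infinite C"
    then show "\<exists>F' C'. strict_extension F' C' F C \<and> (\<forall>G\<in>between F' C'. op_apply \<Theta> G \<noteq> A)"
      using force_not_uniform[OF _ _ _ no_uniform] by blast
  qed
  then show False
    using assms(2) unfolding ce_in_def by blast
qed

end
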